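(* Assume $\|\Sigma_1\|\le C$ for a universal constant $C$ and $p,n\to\infty$ with $p/n\to c\in(0,\infty)$. Then $$\frac1p\,\mathbb E\|\mathbf M_2\|_F^2\to0 .$$
   Context: Setting. For each $n$, let $p=p_n$ and $\mathbf x_1,\dots,\mathbf x_n\in\mathbb R^p$ i.i.d. with an absolutely continuous distribution. $\mathbf A_{ij}=\operatorname{sign}(\mathbf x_i-\mathbf x_j)$ (componentwise sign), $\mathbf A_i=\mathbb E\{\operatorname{sign}(\mathbf x_i-\mathbf x)\mid\mathbf x_i\}$ with $\mathbf x$ an independent copy of $\mathbf x_1$, $\Sigma_1=\operatorname{cov}(\mathbf A_{ij})$ ($i\ne j$), $\Sigma_2=\operatorname{cov}(\mathbf A_i)$, $\Sigma_3=\Sigma_1-2\Sigma_2$. Define $\epsilon_{ij}=\mathbf A_{ij}-\mathbf A_i+\mathbf A_j$ and $\mathbf M_2=\frac{2}{n(n-1)}\sum_{1\le i<j\le n}(\mathbf A_i-\mathbf A_j)\epsilon_{ij}^{\top}$. $\|\cdot\|$ is the spectral norm and $\|\cdot\|_F$ the Frobenius norm. *)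

theory Defs
  imports "HOL-Probability.Probability"
begin

text \<open>Vectors in R^p are functions nat => real, only the components k < p matter;
  points of R^p live in the space of PiM {..<p} (lambda _. borel).
  p x p matrices are functions nat => nat => real, entries with k, l < p.\<close>

definition sign_vec :: "(nat \<Rightarrow> real) \<Rightarrow> (nat \<Rightarrow> real) \<Rightarrow> nat \<Rightarrow> real" where
  "sign_vec x y = (\<lambda>k. sgn (x k - y k))"

definition A_fun :: "(nat \<Rightarrow> real) measure \<Rightarrow> (nat \<Rightarrow> real) \<Rightarrow> nat \<Rightarrow> real" where
  "A_fun \<mu> y = (\<lambda>k. \<integral>x. sgn (y k - x k) \<partial>\<mu>)"

definition eps_fun :: "(nat \<Rightarrow> real) measure \<Rightarrow> (nat \<Rightarrow> real) \<Rightarrow> (nat \<Rightarrow> real) \<Rightarrow> nat \<Rightarrow> real" where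
  "eps_fun \<mu> xi xj = (\<lambda>k. sign_vec xi xj k - A_fun \<mu> xi k + A_fun \<mu> xj k)"

definition M2 :: "(nat \<Rightarrow> real) measure \<Rightarrow> nat \<Rightarrow> (nat \<Rightarrow> (nat \<Rightarrow> real)) \<Rightarrow> nat \<Rightarrow> nat \<Rightarrow> real" where
  "M2 \<mu> n xs = (\<lambda>k l. 2 / (real n * (real n - 1)) *
      (\<Sum>j<n. \<Sum>i<j. (A_fun \<mu> (xs i) k - A_fun \<mu> (xs j) k) * eps_fun \<mu> (xs i) (xs j) l))"

definition Sigma1 :: "(nat \<Rightarrow> real) measure \<Rightarrow> nat \<Rightarrow> nat \<Rightarrow> real" where
  "Sigma1 \<mu> = (\<lambda>k l.
      (\<integral>z. sign_vec (fst z) (snd z) k * sign_vec (fst z) (snd z) l \<partial>(\<mu> \<Otimes>\<^sub>M \<mu>))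
      - (\<integral>z. sign_vec (fst z) (snd z) k \<partial>(\<mu> \<Otimes>\<^sub>M \<mu>))
        * (\<integral>z. sign_vec (fst z) (snd z) l \<partial>(\<mu> \<Otimes>\<^sub>M \<mu>)))"

definition spec_norm :: "nat \<Rightarrow> (nat \<Rightarrow> nat \<Rightarrow> real) \<Rightarrow> real" where
  "spec_norm p M = Sup {sqrt (\<Sum>k<p. (\<Sum>l<p. M k l * v l)\<^sup>2) | v. (\<Sum>l<p. (v l)\<^sup>2) = 1}"

definition frob_norm :: "nat \<Rightarrow> (nat \<Rightarrow> nat \<Rightarrow> real) \<Rightarrow> real" where
  "frob_norm p M = sqrt (\<Sum>k<p. \<Sum>l<p. (M k l)\<^sup>2)"

end

theory Submission
  imports Defs "HOL-Real_Asymp.Real_Asymp"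
begin

text \<open>
  M2 is a U-statistic of order two with the symmetric kernel h(x, y) = (A(x) - A(y)) eps(x, y)^T,
  whose projection g(x) = E_y h(x, y) has mean zero. Expanding E ||M2||_F^2 over pairs of index
  pairs, the pairs with four distinct indices contribute nothing, the O(n^2) diagonal pairs
  contribute O(p^2) each, and the O(n^3) pairs sharing one index contribute E ||g(x)||_F^2 each.
  Every column of g(x) has squared length at most 9 ||Sigma1||, because cov(A_i) <= Sigma1
  (A_i is a conditional expectation of A_ij). Hence E ||M2||_F^2 = O((p^2 + n p) / n^2), which
  is o(p) when p/n converges.
\<close>

context prob_space
begin

lemma integrable_bounded:
  fixes f :: "'a \<Rightarrow> real"
  assumes "f \<in> borel_measurable M" "\<And>x. \<bar>f x\<bar> \<le> B"
  shows "integrable M f"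
  using assms by (intro integrable_const_bound[where B = B]) auto

lemma abs_integral_le_bound:
  fixes f :: "'a \<Rightarrow> real"
  assumes "\<And>x. \<bar>f x\<bar> \<le> B"
  shows "\<bar>\<integral>x. f x \<partial>M\<bar> \<le> B"
proof -
  have "\<bar>\<integral>x. f x \<partial>M\<bar> \<le> (\<integral>x. \<bar>f x\<bar> \<partial>M)"
    by (rule integral_abs_bound)
  also have "\<dots> \<le> (\<integral>x. B \<partial>M)"
    using assms order.trans[OF abs_ge_zero assms] by (intro integral_mono_AE') auto
  finally show ?thesis
    by (simp add: prob_space)
qed

lemma square_integral_le_integral_square:
  fixes f :: "'a \<Rightarrow> real"
  assumes f: "f \<in> borel_measurable M" and bound: "\<And>x. \<bar>f x\<bar> \<le> B"
  shows "(\<integral>x. f x \<partial>M)\<^sup>2 \<le> (\<integral>x. (f x)\<^sup>2 \<partial>M)"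
proof -
  have "\<bar>(f x)\<^sup>2\<bar> \<le> B\<^sup>2" for x
    using bound[of x] abs_le_square_iff[of "f x" B] by simp
  then have "integrable M (\<lambda>x. (f x)\<^sup>2)"
    using f by (intro integrable_bounded) auto
  then show ?thesis
    using variance_eq[OF integrable_bounded[OF f bound]] variance_positive[of f] by simp
qed

lemma integral_PiM_remove_coordinate:
  fixes G :: "('i \<Rightarrow> 'a) \<Rightarrow> real"
  assumes I: "finite I" "i \<in> I"
    and G: "G \<in> borel_measurable (PiM I (\<lambda>_. M))" and bound: "\<And>x. \<bar>G x\<bar> \<le> B"
  shows "(\<integral>x. G x \<partial>PiM I (\<lambda>_. M)) = (\<integral>x. (\<integral>y. G (x(i := y)) \<partial>M) \<partial>PiM (I - {i}) (\<lambda>_. M))"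
proof -
  interpret P: prob_space "PiM I (\<lambda>_. M)"
    by (rule prob_space_PiM) (rule prob_space_axioms)
  interpret product_prob_space "\<lambda>_. M" I
    by (intro product_prob_spaceI) (rule prob_space_axioms)
  have "insert i (I - {i}) = I"
    using I by auto
  then show ?thesis
    using product_integral_insert[of "I - {i}" i G] P.integrable_bounded[OF G bound] I by simp
qed

end

lemma neg_integral_mult_le:
  fixes f g :: "'a \<Rightarrow> real"
  assumes t: "0 < t" and fg: "integrable M (\<lambda>x. f x * g x)"
    and f: "integrable M (\<lambda>x. (f x)\<^sup>2)" and g: "integrable M (\<lambda>x. (g x)\<^sup>2)"
  shows "- (\<integral>x. f x * g x \<partial>M) \<le> (\<integral>x. (f x)\<^sup>2 \<partial>M) / (2 * t) + t * (\<integral>x. (g x)\<^sup>2 \<partial>M) / 2"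
proof -
  have "- (f x * g x) \<le> (f x)\<^sup>2 / (2 * t) + t * (g x)\<^sup>2 / 2" for x
  proof -
    have "0 \<le> (f x + t * g x)\<^sup>2 / (2 * t)"
      using t by simp
    also have "\<dots> = (f x)\<^sup>2 / (2 * t) + t * (g x)\<^sup>2 / 2 + f x * g x"
      using t by (simp add: field_simps power2_eq_square)
    finally show ?thesis by simp
  qed
  then have "(\<integral>x. - (f x * g x) \<partial>M) \<le> (\<integral>x. (f x)\<^sup>2 / (2 * t) + t * (g x)\<^sup>2 / 2 \<partial>M)"
    using fg f g by (intro integral_mono) auto
  then show ?thesis
    using f g by simp
qed

section \<open>Spectral and Frobenius norms\<close>

lemma spec_norm_bdd_above:
  fixes p :: nat
  shows "bdd_above {sqrt (\<Sum>k<p. (\<Sum>l<p. X k l * v l)\<^sup>2) | v. (\<Sum>l<p. (v l)\<^sup>2) = 1}"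
proof (rule bdd_aboveI, safe)
  fix v :: "nat \<Rightarrow> real"
  assume v: "(\<Sum>l<p. (v l)\<^sup>2) = 1"
  have "\<bar>v l\<bar> \<le> 1" if "l < p" for l
  proof -
    have "(v l)\<^sup>2 \<le> (\<Sum>l<p. (v l)\<^sup>2)"
      by (rule member_le_sum) (use that in auto)
    then show ?thesis
      using v abs_le_square_iff[of "v l" 1] by simp
  qed
  then have "\<bar>\<Sum>l<p. X k l * v l\<bar> \<le> \<bar>\<Sum>l<p. \<bar>X k l\<bar>\<bar>" for k
    by (auto simp: abs_mult sum_nonneg intro!: order.trans[OF sum_abs] sum_mono mult_left_le)
  then have "(\<Sum>l<p. X k l * v l)\<^sup>2 \<le> (\<Sum>l<p. \<bar>X k l\<bar>)\<^sup>2" for k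
    by (simp only: abs_le_square_iff)
  then show "sqrt (\<Sum>k<p. (\<Sum>l<p. X k l * v l)\<^sup>2) \<le> sqrt (\<Sum>k<p. (\<Sum>l<p. \<bar>X k l\<bar>)\<^sup>2)"
    by (intro real_sqrt_le_mono sum_mono)
qed

lemma spec_norm_mult_le:
  assumes "spec_norm p X \<le> C"
  shows "sqrt (\<Sum>k<p. (\<Sum>l<p. X k l * v l)\<^sup>2) \<le> C * sqrt (\<Sum>l<p. (v l)\<^sup>2)"
proof (cases "(\<Sum>l<p. (v l)\<^sup>2) = 0")
  case True
  then have "\<forall>l\<in>{..<p}. v l = 0"
    by (subst (asm) sum_nonneg_eq_0_iff) auto
  then show ?thesis by simp
next
  case False
  define r where "r = sqrt (\<Sum>l<p. (v l)\<^sup>2)"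
  have r: "r > 0"
    using False by (simp add: r_def sum_nonneg order.not_eq_order_implies_strict)
  define u where "u l = v l / r" for l
  have "(\<Sum>l<p. (u l)\<^sup>2) = (\<Sum>l<p. (v l)\<^sup>2) / r\<^sup>2"
    by (simp add: u_def power_divide sum_divide_distrib)
  also have "\<dots> = 1"
    using False by (simp add: r_def sum_nonneg)
  finally have "sqrt (\<Sum>k<p. (\<Sum>l<p. X k l * u l)\<^sup>2) \<le> spec_norm p X"
    unfolding spec_norm_def by (intro cSup_upper[OF _ spec_norm_bdd_above]) blast
  moreover have "(\<Sum>l<p. X k l * v l) = r * (\<Sum>l<p. X k l * u l)" for k
    using r by (simp add: u_def sum_distrib_left)
  then have "sqrt (\<Sum>k<p. (\<Sum>l<p. X k l * v l)\<^sup>2) = r * sqrt (\<Sum>k<p. (\<Sum>l<p. X k l * u l)\<^sup>2)"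
    using r by (simp add: power_mult_distrib sum_distrib_left[symmetric] real_sqrt_mult)
  ultimately show ?thesis
    using assms r by (simp add: r_def mult.commute)
qed

lemma quadratic_form_le_spec_norm:
  assumes "spec_norm p X \<le> C"
  shows "(\<Sum>k<p. v k * (\<Sum>l<p. X k l * v l)) \<le> C * (\<Sum>l<p. (v l)\<^sup>2)"
proof -
  have "(\<Sum>k<p. v k * (\<Sum>l<p. X k l * v l)) \<le> sqrt ((\<Sum>k<p. v k * (\<Sum>l<p. X k l * v l))\<^sup>2)"
    by simp
  also have "\<dots> \<le> sqrt ((\<Sum>k<p. (v k)\<^sup>2) * (\<Sum>k<p. (\<Sum>l<p. X k l * v l)\<^sup>2))"
    by (rule real_sqrt_le_mono[OF Cauchy_Schwarz_ineq_sum])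
  also have "\<dots> = sqrt (\<Sum>k<p. (v k)\<^sup>2) * sqrt (\<Sum>k<p. (\<Sum>l<p. X k l * v l)\<^sup>2)"
    by (simp add: real_sqrt_mult)
  also have "\<dots> \<le> sqrt (\<Sum>k<p. (v k)\<^sup>2) * (C * sqrt (\<Sum>l<p. (v l)\<^sup>2))"
    by (intro mult_left_mono spec_norm_mult_le assms) (simp add: sum_nonneg)
  also have "\<dots> = C * (\<Sum>l<p. (v l)\<^sup>2)"
    by (simp add: sum_nonneg)
  finally show ?thesis .
qed

definition frob_inner :: "nat \<Rightarrow> (nat \<Rightarrow> nat \<Rightarrow> real) \<Rightarrow> (nat \<Rightarrow> nat \<Rightarrow> real) \<Rightarrow> real" where
  "frob_inner p X Y = (\<Sum>k<p. \<Sum>l<p. X k l * Y k l)"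

lemma frob_norm_square: "(frob_norm p X)\<^sup>2 = frob_inner p X X"
  by (simp add: frob_norm_def frob_inner_def power2_eq_square sum_nonneg)

lemma frob_inner_commute: "frob_inner p X Y = frob_inner p Y X"
  by (simp add: frob_inner_def mult.commute)

lemma frob_inner_sum_sum:
  "frob_inner p (\<lambda>k l. \<Sum>i\<in>I. X i k l) (\<lambda>k l. \<Sum>j\<in>J. Y j k l) = (\<Sum>i\<in>I. \<Sum>j\<in>J. frob_inner p (X i) (Y j))"
proof -
  have "frob_inner p (\<lambda>k l. \<Sum>i\<in>I. X i k l) (\<lambda>k l. \<Sum>j\<in>J. Y j k l)
      = (\<Sum>k<p. \<Sum>l<p. \<Sum>i\<in>I. \<Sum>j\<in>J. X i k l * Y j k l)"
    by (simp add: frob_inner_def sum_product)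
  also have "\<dots> = (\<Sum>i\<in>I. \<Sum>j\<in>J. \<Sum>k<p. \<Sum>l<p. X i k l * Y j k l)"
    by (simp only: sum.cartesian_product[of _ "{..<p}" "{..<p}"] sum.swap[of _ "{..<p} \<times> {..<p}"])
      (simp add: case_prod_unfold)
  finally show ?thesis
    by (simp add: frob_inner_def)
qed

lemma frob_inner_mult_mult:
  "frob_inner p (\<lambda>k l. c * X k l) (\<lambda>k l. c * Y k l) = c\<^sup>2 * frob_inner p X Y"
  by (simp add: frob_inner_def sum_distrib_left power2_eq_square algebra_simps)

lemma frob_inner_eq_0_left:
  assumes "\<And>k l. k < p \<Longrightarrow> l < p \<Longrightarrow> X k l = 0"
  shows "frob_inner p X Y = 0"
  using assms by (simp add: frob_inner_def)

lemma abs_frob_inner_le: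
  assumes "\<And>k l. \<bar>X k l\<bar> \<le> a" "\<And>k l. \<bar>Y k l\<bar> \<le> b"
  shows "\<bar>frob_inner p X Y\<bar> \<le> real p * real p * (a * b)"
proof -
  have "\<bar>X k l * Y k l\<bar> \<le> a * b" for k l
    unfolding abs_mult using assms order.trans[OF abs_ge_zero assms(1)] by (intro mult_mono) auto
  then have "\<bar>frob_inner p X Y\<bar> \<le> (\<Sum>k<p. \<Sum>l<p. a * b)"
    unfolding frob_inner_def
    by (intro order.trans[OF sum_abs] sum_mono order.trans[OF sum_abs]) auto
  then show ?thesis by simp
qed

lemma integral_frob_inner_left:
  fixes X :: "'a \<Rightarrow> nat \<Rightarrow> nat \<Rightarrow> real"
  assumes "\<And>k l. k < p \<Longrightarrow> l < p \<Longrightarrow> integrable M (\<lambda>x. X x k l)"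
  shows "(\<integral>x. frob_inner p (X x) Y \<partial>M) = frob_inner p (\<lambda>k l. \<integral>x. X x k l \<partial>M) Y"
proof -
  have "(\<integral>x. frob_inner p (X x) Y \<partial>M) = (\<Sum>k<p. \<integral>x. (\<Sum>l<p. X x k l * Y k l) \<partial>M)"
    unfolding frob_inner_def
    by (intro Bochner_Integration.integral_sum Bochner_Integration.integrable_sum
        integrable_mult_left assms) auto
  also have "\<dots> = (\<Sum>k<p. \<Sum>l<p. \<integral>x. X x k l * Y k l \<partial>M)"
    by (intro sum.cong refl Bochner_Integration.integral_sum integrable_mult_left assms) auto
  finally show ?thesis
    by (simp add: frob_inner_def)
qed

lemma borel_measurable_frob_inner:
  assumes "\<And>k l. k < p \<Longrightarrow> l < p \<Longrightarrow> (\<lambda>x. X x k l) \<in> borel_measurable M"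
    and "\<And>k l. k < p \<Longrightarrow> l < p \<Longrightarrow> (\<lambda>x. Y x k l) \<in> borel_measurable M"
  shows "(\<lambda>x. frob_inner p (X x) (Y x)) \<in> borel_measurable M"
  unfolding frob_inner_def using assms by (intro borel_measurable_sum borel_measurable_times) auto

lemma frob_inner_self_nonneg: "0 \<le> frob_inner p X X"
  by (simp add: frob_inner_def sum_nonneg)

lemma frob_inner_self_le:
  assumes "\<And>l. l < p \<Longrightarrow> (\<Sum>k<p. (X k l)\<^sup>2) \<le> B"
  shows "frob_inner p X X \<le> real p * B"
proof -
  have "frob_inner p X X = (\<Sum>l<p. \<Sum>k<p. (X k l)\<^sup>2)"
    unfolding frob_inner_def power2_eq_square by (rule sum.swap)
  also have "\<dots> \<le> (\<Sum>l<p. B)"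
    by (intro sum_mono assms) simp
  finally show ?thesis by simp
qed

section \<open>Pairs of sample indices\<close>

definition index_pairs :: "nat \<Rightarrow> (nat \<times> nat) set" where
  "index_pairs n = {(i, j). i < j \<and> j < n}"

definition pairs_meet :: "nat \<times> nat \<Rightarrow> nat \<times> nat \<Rightarrow> bool" where
  "pairs_meet q q' \<longleftrightarrow> {fst q, snd q} \<inter> {fst q', snd q'} \<noteq> {}"

lemma index_pairs_subset: "index_pairs n \<subseteq> {..<n} \<times> {..<n}"
  by (auto simp: index_pairs_def)

lemma finite_index_pairs [simp]: "finite (index_pairs n)"
  using finite_subset[OF index_pairs_subset] by blast

lemma sum_index_pairs: "(\<Sum>j<n. \<Sum>i<j. f i j) = (\<Sum>(i, j)\<in>index_pairs n. f i j)"
proof -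
  have "(\<Sum>j<n. \<Sum>i<j. f i j) = (\<Sum>(j, i)\<in>(SIGMA j:{..<n}. {..<j}). f i j)"
    by (simp add: sum.Sigma)
  also have "\<dots> = (\<Sum>(i, j)\<in>index_pairs n. f i j)"
    by (rule sum.reindex_bij_witness[of _ prod.swap prod.swap]) (auto simp: index_pairs_def)
  finally show ?thesis .
qed

lemma card_meeting_pairs_le: "card {q' \<in> index_pairs n. pairs_meet q q'} \<le> 4 * n"
proof -
  let ?S = "{fst q, snd q}"
  have "card {q' \<in> index_pairs n. pairs_meet q q'} \<le> card (?S \<times> {..<n} \<union> {..<n} \<times> ?S)"
    using index_pairs_subset by (intro card_mono) (auto simp: pairs_meet_def)
  also have "\<dots> \<le> card (?S \<times> {..<n}) + card ({..<n} \<times> ?S)"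
    by (rule card_Un_le)
  also have "\<dots> \<le> 2 * n + n * 2"
    by (intro add_mono) (simp_all add: card_cartesian_product card_insert_le_m1)
  finally show ?thesis by simp
qed

lemma meeting_index_pairs_obtain_shared:
  assumes "q \<in> index_pairs n" "q' \<in> index_pairs n" "q' \<noteq> q" "pairs_meet q q'"
  obtains s u w where "distinct [s, u, w]" "{s, u} = {fst q, snd q}" "{s, w} = {fst q', snd q'}"
proof -
  obtain i j i' j' where ij: "q = (i, j)" "i < j" and ij': "q' = (i', j')" "i' < j'"
    using assms(1,2) by (auto simp: index_pairs_def)
  consider "i = i'" | "i = j'" | "j = i'" | "j = j'"
    using assms(4) ij ij' by (auto simp: pairs_meet_def)
  then show ?thesis
  proof cases
    case 1
    then show ?thesis using assms(3) ij ij' by (intro that[of i j j']) auto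
  next
    case 2
    then show ?thesis using ij ij' by (intro that[of i j i']) auto
  next
    case 3
    then show ?thesis using ij ij' by (intro that[of j i j']) auto
  next
    case 4
    then show ?thesis using assms(3) ij ij' by (intro that[of j i i']) auto
  qed
qed

lemma sum_index_pairs_le:
  fixes T :: "nat \<times> nat \<Rightarrow> nat \<times> nat \<Rightarrow> real"
  assumes T: "\<And>q q'. q \<in> index_pairs n \<Longrightarrow> q' \<in> index_pairs n \<Longrightarrow>
      T q q' \<le> (if q' = q then a else 0) + (if pairs_meet q q' then b else 0)"
    and a: "0 \<le> a" and b: "0 \<le> b"
  shows "(\<Sum>q\<in>index_pairs n. \<Sum>q'\<in>index_pairs n. T q q') \<le> real n * real n * (a + 4 * real n * b)"
proof -
  have "(\<Sum>q'\<in>index_pairs n. T q q') \<le> a + 4 * real n * b" if q: "q \<in> index_pairs n" for q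
  proof -
    have "(\<Sum>q'\<in>index_pairs n. T q q')
        \<le> (\<Sum>q'\<in>index_pairs n. (if q' = q then a else 0) + (if pairs_meet q q' then b else 0))"
      using q by (intro sum_mono T)
    also have "\<dots> = a + real (card {q' \<in> index_pairs n. pairs_meet q q'}) * b"
      using q by (simp add: sum.distrib sum.inter_filter[symmetric])
    also have "\<dots> \<le> a + 4 * real n * b"
      using card_meeting_pairs_le[of n q] b by (intro add_left_mono mult_right_mono) auto
    finally show ?thesis .
  qed
  then have "(\<Sum>q\<in>index_pairs n. \<Sum>q'\<in>index_pairs n. T q q') \<le> (\<Sum>q\<in>index_pairs n. a + 4 * real n * b)"
    by (intro sum_mono)
  also have "\<dots> = real (card (index_pairs n)) * (a + 4 * real n * b)"
    by simp
  also have "\<dots> \<le> real n * real n * (a + 4 * real n * b)"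
  proof (rule mult_right_mono)
    have "card (index_pairs n) \<le> card ({..<n} \<times> {..<n})"
      by (intro card_mono index_pairs_subset) simp
    then show "real (card (index_pairs n)) \<le> real n * real n"
      unfolding card_cartesian_product card_lessThan of_nat_mult[symmetric] by (rule of_nat_mono)
    show "0 \<le> a + 4 * real n * b"
      using a b by simp
  qed
  finally show ?thesis .
qed

section \<open>The kernel of M2 and its projection\<close>

locale sign_sample = prob_space \<mu> for \<mu> :: "(nat \<Rightarrow> real) measure" +
  fixes p :: nat
  assumes sets_eq [measurable_cong]: "sets \<mu> = sets (PiM {..<p} (\<lambda>_. borel))"
begin

sublocale pair: pair_prob_space \<mu> \<mu>
  by unfold_locales

lemma measurable_coordinate [measurable]: "k < p \<Longrightarrow> (\<lambda>x. x k) \<in> borel_measurable \<mu>"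
  by measurable

lemma measurable_A_fun [measurable]: "k < p \<Longrightarrow> (\<lambda>x. A_fun \<mu> x k) \<in> borel_measurable \<mu>"
  unfolding A_fun_def by measurable

lemma measurable_eps_fun [measurable]:
  "l < p \<Longrightarrow> (\<lambda>x. eps_fun \<mu> x y l) \<in> borel_measurable \<mu>"
  "l < p \<Longrightarrow> (\<lambda>y. eps_fun \<mu> x y l) \<in> borel_measurable \<mu>"
  unfolding eps_fun_def sign_vec_def by measurable

lemma abs_A_fun_le: "\<bar>A_fun \<mu> x k\<bar> \<le> 1"
  unfolding A_fun_def by (rule abs_integral_le_bound) (simp add: abs_sgn_eq)

lemma abs_eps_fun_le: "\<bar>eps_fun \<mu> x y l\<bar> \<le> 3"
proof -
  have "\<bar>sgn (x l - y l) :: real\<bar> \<le> 1"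
    by (simp add: abs_sgn_eq)
  then show ?thesis
    using abs_A_fun_le[of x l] abs_A_fun_le[of y l] unfolding eps_fun_def sign_vec_def by linarith
qed

lemma eps_fun_swap: "eps_fun \<mu> y x l = - eps_fun \<mu> x y l"
  by (simp add: eps_fun_def sign_vec_def sgn_if)

lemma integral_A_fun:
  assumes "k < p"
  shows "(\<integral>x. A_fun \<mu> x k \<partial>\<mu>) = 0"
proof -
  have "integrable (\<mu> \<Otimes>\<^sub>M \<mu>) (\<lambda>(x, y). sgn (x k - y k) :: real)"
    using assms by (intro pair.integrable_bounded[where B = 1]) (auto simp: abs_sgn_eq)
  then have "(\<integral>x. A_fun \<mu> x k \<partial>\<mu>) = (\<integral>y. \<integral>x. sgn (x k - y k) \<partial>\<mu> \<partial>\<mu>)"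
    unfolding A_fun_def by (rule pair.Fubini_integral[symmetric])
  also have "\<dots> = (\<integral>y. \<integral>x. - sgn (y k - x k) \<partial>\<mu> \<partial>\<mu>)"
    by (intro Bochner_Integration.integral_cong) (auto simp: sgn_if)
  also have "\<dots> = (\<integral>y. - A_fun \<mu> y k \<partial>\<mu>)"
    by (simp add: A_fun_def)
  also have "\<dots> = - (\<integral>x. A_fun \<mu> x k \<partial>\<mu>)"
    by simp
  finally show ?thesis by simp
qed

lemma integral_eps_fun:
  assumes "l < p"
  shows "(\<integral>y. eps_fun \<mu> x y l \<partial>\<mu>) = 0"
proof -
  have "integrable \<mu> (\<lambda>y. sgn (x l - y l) :: real)"
    using assms by (intro integrable_bounded[where B = 1]) (auto simp: abs_sgn_eq)
  moreover have "integrable \<mu> (\<lambda>y. A_fun \<mu> y l)"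
    using assms abs_A_fun_le by (intro integrable_bounded) auto
  ultimately show ?thesis
    using integral_A_fun[OF assms] by (simp add: eps_fun_def sign_vec_def A_fun_def[of _ x] prob_space)
qed

lemma integral_eps_fun_left:
  assumes "l < p"
  shows "(\<integral>x. eps_fun \<mu> x y l \<partial>\<mu>) = 0"
proof -
  have "(\<integral>x. eps_fun \<mu> x y l \<partial>\<mu>) = (\<integral>x. - eps_fun \<mu> y x l \<partial>\<mu>)"
    by (rule Bochner_Integration.integral_cong) (simp_all add: eps_fun_swap[of y])
  then show ?thesis
    by (simp add: integral_eps_fun assms)
qed

definition M2_kernel :: "(nat \<Rightarrow> real) \<Rightarrow> (nat \<Rightarrow> real) \<Rightarrow> nat \<Rightarrow> nat \<Rightarrow> real" where
  "M2_kernel x y = (\<lambda>k l. (A_fun \<mu> x k - A_fun \<mu> y k) * eps_fun \<mu> x y l)"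

definition M2_projection :: "(nat \<Rightarrow> real) \<Rightarrow> nat \<Rightarrow> nat \<Rightarrow> real" where
  "M2_projection x = (\<lambda>k l. \<integral>y. M2_kernel x y k l \<partial>\<mu>)"

lemma measurable_M2_kernel_pair:
  "k < p \<Longrightarrow> l < p \<Longrightarrow> (\<lambda>(x, y). M2_kernel x y k l) \<in> borel_measurable (\<mu> \<Otimes>\<^sub>M \<mu>)"
  unfolding M2_kernel_def eps_fun_def sign_vec_def by measurable

lemma measurable_M2_kernel [measurable]:
  "k < p \<Longrightarrow> l < p \<Longrightarrow> (\<lambda>x. M2_kernel x y k l) \<in> borel_measurable \<mu>"
  "k < p \<Longrightarrow> l < p \<Longrightarrow> (\<lambda>y. M2_kernel x y k l) \<in> borel_measurable \<mu>"
  unfolding M2_kernel_def by measurable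

lemma measurable_M2_projection [measurable]:
  "k < p \<Longrightarrow> l < p \<Longrightarrow> (\<lambda>x. M2_projection x k l) \<in> borel_measurable \<mu>"
  unfolding M2_projection_def
  by (rule borel_measurable_lebesgue_integral) (rule measurable_M2_kernel_pair)

lemma M2_kernel_commute: "M2_kernel y x = M2_kernel x y"
  by (simp add: M2_kernel_def eps_fun_swap[of y x] fun_eq_iff algebra_simps)

lemma abs_M2_kernel_le: "\<bar>M2_kernel x y k l\<bar> \<le> 6"
proof -
  have "\<bar>A_fun \<mu> x k - A_fun \<mu> y k\<bar> * \<bar>eps_fun \<mu> x y l\<bar> \<le> 2 * 3"
    using abs_A_fun_le[of x k] abs_A_fun_le[of y k] abs_eps_fun_le[of x y l]
    by (intro mult_mono) auto
  then show ?thesis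
    by (simp add: M2_kernel_def abs_mult)
qed

lemma abs_M2_projection_le: "\<bar>M2_projection x k l\<bar> \<le> 6"
  unfolding M2_projection_def by (rule abs_integral_le_bound) (rule abs_M2_kernel_le)

lemma integrable_M2_kernel [simp]:
  "k < p \<Longrightarrow> l < p \<Longrightarrow> integrable \<mu> (\<lambda>y. M2_kernel x y k l)"
  by (rule integrable_bounded[OF _ abs_M2_kernel_le]) measurable

lemma integrable_M2_projection [simp]:
  "k < p \<Longrightarrow> l < p \<Longrightarrow> integrable \<mu> (\<lambda>x. M2_projection x k l)"
  by (rule integrable_bounded[OF _ abs_M2_projection_le]) measurable

lemma M2_projection_eq:
  assumes "k < p" "l < p"
  shows "M2_projection x k l = - (\<integral>y. A_fun \<mu> y k * eps_fun \<mu> x y l \<partial>\<mu>)"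
proof -
  have "integrable \<mu> (\<lambda>y. eps_fun \<mu> x y l)"
    by (rule integrable_bounded[OF _ abs_eps_fun_le]) (use assms in measurable)
  moreover have "integrable \<mu> (\<lambda>y. A_fun \<mu> y k * eps_fun \<mu> x y l)"
  proof (rule integrable_bounded)
    show "\<bar>A_fun \<mu> y k * eps_fun \<mu> x y l\<bar> \<le> 1 * 3" for y
      unfolding abs_mult using abs_A_fun_le abs_eps_fun_le by (intro mult_mono) auto
  qed (use assms in measurable)
  ultimately have "(\<integral>y. A_fun \<mu> x k * eps_fun \<mu> x y l - A_fun \<mu> y k * eps_fun \<mu> x y l \<partial>\<mu>)
      = A_fun \<mu> x k * (\<integral>y. eps_fun \<mu> x y l \<partial>\<mu>) - (\<integral>y. A_fun \<mu> y k * eps_fun \<mu> x y l \<partial>\<mu>)"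
    by simp
  then show ?thesis
    by (simp add: M2_projection_def M2_kernel_def left_diff_distrib integral_eps_fun assms)
qed

lemma integral_M2_projection:
  assumes "k < p" "l < p"
  shows "(\<integral>x. M2_projection x k l \<partial>\<mu>) = 0"
proof -
  have "integrable (\<mu> \<Otimes>\<^sub>M \<mu>) (\<lambda>(x, y). A_fun \<mu> y k * eps_fun \<mu> x y l)"
  proof (rule pair.integrable_bounded)
    show "\<bar>(\<lambda>(x, y). A_fun \<mu> y k * eps_fun \<mu> x y l) z\<bar> \<le> 1 * 3" for z
      unfolding case_prod_beta abs_mult using abs_A_fun_le abs_eps_fun_le by (intro mult_mono) auto
  qed (use assms in \<open>unfold eps_fun_def sign_vec_def, measurable\<close>)
  then have "(\<integral>x. \<integral>y. A_fun \<mu> y k * eps_fun \<mu> x y l \<partial>\<mu> \<partial>\<mu>)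
      = (\<integral>y. \<integral>x. A_fun \<mu> y k * eps_fun \<mu> x y l \<partial>\<mu> \<partial>\<mu>)"
    by (rule pair.Fubini_integral[symmetric])
  then show ?thesis
    by (simp add: M2_projection_eq assms integral_eps_fun_left)
qed

lemma integral_sign_vec:
  assumes "k < p"
  shows "(\<integral>z. sign_vec (fst z) (snd z) k \<partial>(\<mu> \<Otimes>\<^sub>M \<mu>)) = 0"
proof -
  have "integrable (\<mu> \<Otimes>\<^sub>M \<mu>) (\<lambda>(x, y). sign_vec x y k)"
    using assms by (intro pair.integrable_bounded[where B = 1]) (auto simp: sign_vec_def abs_sgn_eq)
  from pair.integral_fst'[OF this]
  have "(\<integral>x. \<integral>y. sign_vec x y k \<partial>\<mu> \<partial>\<mu>) = (\<integral>z. sign_vec (fst z) (snd z) k \<partial>(\<mu> \<Otimes>\<^sub>M \<mu>))"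
    by (simp add: case_prod_beta')
  then show ?thesis
    using integral_A_fun[OF assms] by (simp add: A_fun_def sign_vec_def)
qed

lemma integral_sign_vec_quadratic_form:
  "(\<integral>z. (\<Sum>k<p. v k * sign_vec (fst z) (snd z) k)\<^sup>2 \<partial>(\<mu> \<Otimes>\<^sub>M \<mu>))
    = (\<Sum>k<p. v k * (\<Sum>l<p. Sigma1 \<mu> k l * v l))"
proof -
  let ?s = "\<lambda>z k. sign_vec (fst z) (snd z) k"
  have int: "integrable (\<mu> \<Otimes>\<^sub>M \<mu>) (\<lambda>z. ?s z k * ?s z l)" if "k < p" "l < p" for k l
  proof (rule pair.integrable_bounded)
    show "\<bar>?s z k * ?s z l\<bar> \<le> 1" for z
      by (simp add: sign_vec_def abs_mult abs_sgn_eq)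
  qed (use that in \<open>unfold sign_vec_def, measurable\<close>)
  have "(\<integral>z. (\<Sum>k<p. \<Sum>l<p. v k * v l * (?s z k * ?s z l)) \<partial>(\<mu> \<Otimes>\<^sub>M \<mu>))
      = (\<Sum>k<p. \<integral>z. (\<Sum>l<p. v k * v l * (?s z k * ?s z l)) \<partial>(\<mu> \<Otimes>\<^sub>M \<mu>))"
    by (intro Bochner_Integration.integral_sum Bochner_Integration.integrable_sum
        integrable_mult_right int) auto
  also have "\<dots> = (\<Sum>k<p. \<Sum>l<p. \<integral>z. v k * v l * (?s z k * ?s z l) \<partial>(\<mu> \<Otimes>\<^sub>M \<mu>))"
    by (intro sum.cong refl Bochner_Integration.integral_sum integrable_mult_right int) auto
  finally have "(\<integral>z. (\<Sum>k<p. \<Sum>l<p. v k * v l * (?s z k * ?s z l)) \<partial>(\<mu> \<Otimes>\<^sub>M \<mu>))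
      = (\<Sum>k<p. \<Sum>l<p. v k * v l * (\<integral>z. ?s z k * ?s z l \<partial>(\<mu> \<Otimes>\<^sub>M \<mu>)))"
    by simp
  moreover have "(\<Sum>k<p. v k * ?s z k)\<^sup>2 = (\<Sum>k<p. \<Sum>l<p. v k * v l * (?s z k * ?s z l))" for z
    by (simp add: power2_eq_square sum_product algebra_simps)
  ultimately show ?thesis
    by (simp add: Sigma1_def integral_sign_vec sum_distrib_left algebra_simps)
qed

text \<open>
  This is cov(A_i) <= Sigma1 in the direction v: A(x) is the mean of sign(x - y) over y, so Jensen
  bounds the quadratic form of cov(A_i) by that of Sigma1, both means being zero by symmetry.
\<close>

lemma integral_A_fun_quadratic_form_le:
  assumes "spec_norm p (Sigma1 \<mu>) \<le> C"
  shows "(\<integral>x. (\<Sum>k<p. v k * A_fun \<mu> x k)\<^sup>2 \<partial>\<mu>) \<le> C * (\<Sum>k<p. (v k)\<^sup>2)"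
proof -
  define F where "F x y = (\<Sum>k<p. v k * sign_vec x y k)" for x y
  define V where "V = (\<Sum>k<p. \<bar>v k\<bar>)"
  have F_le: "\<bar>F x y\<bar> \<le> V" for x y
    unfolding F_def V_def
    by (intro order.trans[OF sum_abs] sum_mono) (simp add: sign_vec_def abs_mult abs_sgn_eq)
  have F_sq_le: "\<bar>(F x y)\<^sup>2\<bar> \<le> V\<^sup>2" for x y
    using F_le[of x y] abs_le_square_iff[of "F x y" V] by simp
  have [measurable]: "(\<lambda>y. F x y) \<in> borel_measurable \<mu>" for x
    unfolding F_def sign_vec_def by measurable
  have F_pair [measurable]: "(\<lambda>(x, y). (F x y)\<^sup>2) \<in> borel_measurable (\<mu> \<Otimes>\<^sub>M \<mu>)"
    unfolding F_def sign_vec_def by measurable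
  have A_eq: "(\<Sum>k<p. v k * A_fun \<mu> x k) = (\<integral>y. F x y \<partial>\<mu>)" for x
  proof -
    have "integrable \<mu> (\<lambda>y. v k * sgn (x k - y k))" if "k < p" for k
      using that by (intro integrable_mult_right integrable_bounded[where B = 1]) (auto simp: abs_sgn_eq)
    then show ?thesis
      by (simp add: F_def sign_vec_def A_fun_def Bochner_Integration.integral_sum)
  qed
  have jensen: "(\<Sum>k<p. v k * A_fun \<mu> x k)\<^sup>2 \<le> (\<integral>y. (F x y)\<^sup>2 \<partial>\<mu>)" for x
    unfolding A_eq by (rule square_integral_le_integral_square[OF _ F_le]) measurable
  have "integrable \<mu> (\<lambda>x. \<integral>y. (F x y)\<^sup>2 \<partial>\<mu>)"
    by (rule integrable_bounded[OF borel_measurable_lebesgue_integral[OF F_pair]])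
      (rule abs_integral_le_bound[OF F_sq_le])
  then have "(\<integral>x. (\<Sum>k<p. v k * A_fun \<mu> x k)\<^sup>2 \<partial>\<mu>) \<le> (\<integral>x. \<integral>y. (F x y)\<^sup>2 \<partial>\<mu> \<partial>\<mu>)"
    by (intro integral_mono' jensen) simp_all
  also have "\<dots> = (\<integral>z. (F (fst z) (snd z))\<^sup>2 \<partial>(\<mu> \<Otimes>\<^sub>M \<mu>))"
    using pair.integral_fst'[OF pair.integrable_bounded[OF F_pair], of "V\<^sup>2"] F_sq_le
    by (simp add: case_prod_beta')
  also have "\<dots> = (\<Sum>k<p. v k * (\<Sum>l<p. Sigma1 \<mu> k l * v l))"
    unfolding F_def by (rule integral_sign_vec_quadratic_form)
  also have "\<dots> \<le> C * (\<Sum>k<p. (v k)\<^sup>2)"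
    by (rule quadratic_form_le_spec_norm[OF assms])
  finally show ?thesis .
qed

lemma sum_mult_M2_projection_eq:
  assumes l: "l < p"
  shows "(\<Sum>k<p. v k * M2_projection x k l) = - (\<integral>y. (\<Sum>k<p. v k * A_fun \<mu> y k) * eps_fun \<mu> x y l \<partial>\<mu>)"
proof -
  have "integrable \<mu> (\<lambda>y. v k * (A_fun \<mu> y k * eps_fun \<mu> x y l))" if "k < p" for k
  proof (intro integrable_mult_right integrable_bounded)
    show "\<bar>A_fun \<mu> y k * eps_fun \<mu> x y l\<bar> \<le> 1 * 3" for y
      unfolding abs_mult using abs_A_fun_le abs_eps_fun_le by (intro mult_mono) auto
  qed (use that l in measurable)
  then show ?thesis
    by (simp add: M2_projection_eq l sum_negf sum_distrib_right mult.assoc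
        Bochner_Integration.integral_sum)
qed

text \<open>
  For the column g = M2_projection x (-) l and u(y) = g . A(y):
  |g|^2 = - E[u eps_l] <= E[u^2] / (2 C) + C E[eps_l^2] / 2 <= |g|^2 / 2 + 9 C / 2.
\<close>

lemma sum_M2_projection_column_le:
  assumes C: "0 < C" "spec_norm p (Sigma1 \<mu>) \<le> C" and l: "l < p"
  shows "(\<Sum>k<p. (M2_projection x k l)\<^sup>2) \<le> 9 * C"
proof -
  define N where "N = (\<Sum>k<p. (M2_projection x k l)\<^sup>2)"
  define u where "u y = (\<Sum>k<p. M2_projection x k l * A_fun \<mu> y k)" for y
  define V where "V = (\<Sum>k<p. \<bar>M2_projection x k l\<bar>)"
  have u_le: "\<bar>u y\<bar> \<le> V" for y
    unfolding u_def V_def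
    by (intro order.trans[OF sum_abs] sum_mono) (auto simp: abs_mult intro: mult_left_le abs_A_fun_le)
  have [measurable]: "u \<in> borel_measurable \<mu>"
    unfolding u_def by measurable
  have "\<bar>u y * eps_fun \<mu> x y l\<bar> \<le> V * 3" for y
    unfolding abs_mult using u_le order.trans[OF abs_ge_zero u_le] abs_eps_fun_le
    by (intro mult_mono) auto
  then have int_u_eps: "integrable \<mu> (\<lambda>y. u y * eps_fun \<mu> x y l)"
    by (intro integrable_bounded) (use l in measurable)
  have "\<bar>(u y)\<^sup>2\<bar> \<le> V\<^sup>2" for y
    using u_le[of y] abs_le_square_iff[of "u y" V] by simp
  then have int_u_sq: "integrable \<mu> (\<lambda>y. (u y)\<^sup>2)"
    by (intro integrable_bounded) measurable
  have eps_sq_le: "\<bar>(eps_fun \<mu> x y l)\<^sup>2\<bar> \<le> 9" for y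
    using abs_eps_fun_le[of x y l] abs_le_square_iff[of "eps_fun \<mu> x y l" 3] by simp
  then have int_eps_sq: "integrable \<mu> (\<lambda>y. (eps_fun \<mu> x y l)\<^sup>2)"
    by (intro integrable_bounded) (use l in measurable)
  have "N = - (\<integral>y. u y * eps_fun \<mu> x y l \<partial>\<mu>)"
    unfolding N_def u_def power2_eq_square by (rule sum_mult_M2_projection_eq[OF l])
  also have "\<dots> \<le> (\<integral>y. (u y)\<^sup>2 \<partial>\<mu>) / (2 * C) + C * (\<integral>y. (eps_fun \<mu> x y l)\<^sup>2 \<partial>\<mu>) / 2"
    by (rule neg_integral_mult_le[OF C(1) int_u_eps int_u_sq int_eps_sq])
  also have "\<dots> \<le> (C * N) / (2 * C) + C * 9 / 2"
  proof (intro add_mono divide_right_mono mult_left_mono)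
    show "(\<integral>y. (u y)\<^sup>2 \<partial>\<mu>) \<le> C * N"
      unfolding u_def N_def by (rule integral_A_fun_quadratic_form_le[OF C(2)])
    show "(\<integral>y. (eps_fun \<mu> x y l)\<^sup>2 \<partial>\<mu>) \<le> 9"
      using abs_integral_le_bound[OF eps_sq_le] by simp
  qed (use C in simp_all)
  finally show ?thesis
    using C by (simp add: N_def)
qed

section \<open>The second moment of M2\<close>

lemma measurable_M2_kernel_PiM:
  "i \<in> I \<Longrightarrow> j \<in> I \<Longrightarrow> k < p \<Longrightarrow> l < p \<Longrightarrow>
    (\<lambda>xs. M2_kernel (xs i) (xs j) k l) \<in> borel_measurable (PiM I (\<lambda>_. \<mu>))"
  unfolding M2_kernel_def eps_fun_def sign_vec_def by measurable

lemma measurable_M2_projection_PiM: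
  "i \<in> I \<Longrightarrow> k < p \<Longrightarrow> l < p \<Longrightarrow>
    (\<lambda>xs. M2_projection (xs i) k l) \<in> borel_measurable (PiM I (\<lambda>_. \<mu>))"
  by measurable

lemma integral_frob_inner_M2_kernel_left:
  "(\<integral>y. frob_inner p (M2_kernel x y) Y \<partial>\<mu>) = frob_inner p (M2_projection x) Y"
  by (simp add: integral_frob_inner_left M2_projection_def)

lemma integral_frob_inner_M2_kernel_right:
  "(\<integral>y. frob_inner p X (M2_kernel x y) \<partial>\<mu>) = frob_inner p X (M2_projection x)"
  using integral_frob_inner_M2_kernel_left by (simp add: frob_inner_commute[of _ X])

text \<open>Integrating out x_i turns the first factor into the projection at x_j, which has mean zero.\<close>

lemma integral_M2_kernel_disjoint:
  assumes I: "finite I" "i \<in> I" "j \<in> I" "i' \<in> I" "j' \<in> I" and distinct: "distinct [i, j, i', j']"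
  shows "(\<integral>xs. frob_inner p (M2_kernel (xs i) (xs j)) (M2_kernel (xs i') (xs j')) \<partial>PiM I (\<lambda>_. \<mu>)) = 0"
proof -
  let ?K = "\<lambda>xs. M2_kernel (xs i') (xs j')"
  have "(\<integral>xs. frob_inner p (M2_kernel (xs i) (xs j)) (?K xs) \<partial>PiM I (\<lambda>_. \<mu>))
      = (\<integral>xs. \<integral>y. frob_inner p (M2_kernel ((xs(i := y)) i) ((xs(i := y)) j)) (?K (xs(i := y)))
          \<partial>\<mu> \<partial>PiM (I - {i}) (\<lambda>_. \<mu>))"
    by (rule integral_PiM_remove_coordinate[OF I(1,2) borel_measurable_frob_inner])
      (use I in \<open>auto intro!: measurable_M2_kernel_PiM abs_frob_inner_le abs_M2_kernel_le\<close>)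
  also have "\<dots> = (\<integral>xs. \<integral>y. frob_inner p (M2_kernel (xs j) y) (?K xs) \<partial>\<mu> \<partial>PiM (I - {i}) (\<lambda>_. \<mu>))"
    using distinct by (auto simp: M2_kernel_commute)
  also have "\<dots> = (\<integral>xs. frob_inner p (M2_projection (xs j)) (?K xs) \<partial>PiM (I - {i}) (\<lambda>_. \<mu>))"
    by (simp add: integral_frob_inner_M2_kernel_left)
  also have "\<dots> = (\<integral>xs. \<integral>y. frob_inner p (M2_projection ((xs(j := y)) j)) (?K (xs(j := y)))
          \<partial>\<mu> \<partial>PiM (I - {i} - {j}) (\<lambda>_. \<mu>))"
    by (rule integral_PiM_remove_coordinate[OF _ _ borel_measurable_frob_inner])
      (use I distinct in \<open>auto intro!: measurable_M2_kernel_PiM measurable_M2_projection_PiM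
        abs_frob_inner_le abs_M2_kernel_le abs_M2_projection_le\<close>)
  also have "\<dots> = 0"
  proof -
    have "frob_inner p (\<lambda>k l. \<integral>y. M2_projection y k l \<partial>\<mu>) Y = 0" for Y
      by (rule frob_inner_eq_0_left) (rule integral_M2_projection)
    then show ?thesis
      using distinct by (auto simp: integral_frob_inner_left)
  qed
  finally show ?thesis .
qed

text \<open>Integrating out x_u and x_w leaves the squared Frobenius norm of the projection at x_s.\<close>

lemma integral_M2_kernel_shared_le:
  assumes C: "0 < C" "spec_norm p (Sigma1 \<mu>) \<le> C"
    and I: "finite I" "s \<in> I" "u \<in> I" "w \<in> I" and distinct: "distinct [s, u, w]"
  shows "(\<integral>xs. frob_inner p (M2_kernel (xs s) (xs u)) (M2_kernel (xs s) (xs w)) \<partial>PiM I (\<lambda>_. \<mu>))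
    \<le> 9 * C * real p"
proof -
  have "(\<integral>xs. frob_inner p (M2_kernel (xs s) (xs u)) (M2_kernel (xs s) (xs w)) \<partial>PiM I (\<lambda>_. \<mu>))
      = (\<integral>xs. \<integral>y. frob_inner p (M2_kernel ((xs(u := y)) s) ((xs(u := y)) u))
          (M2_kernel ((xs(u := y)) s) ((xs(u := y)) w)) \<partial>\<mu> \<partial>PiM (I - {u}) (\<lambda>_. \<mu>))"
    by (rule integral_PiM_remove_coordinate[OF I(1,3) borel_measurable_frob_inner])
      (use I in \<open>auto intro!: measurable_M2_kernel_PiM abs_frob_inner_le abs_M2_kernel_le\<close>)
  also have "\<dots> = (\<integral>xs. frob_inner p (M2_projection (xs s)) (M2_kernel (xs s) (xs w)) \<partial>PiM (I - {u}) (\<lambda>_. \<mu>))"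
    using distinct by (auto simp: integral_frob_inner_M2_kernel_left)
  also have "\<dots> = (\<integral>xs. \<integral>y. frob_inner p (M2_projection ((xs(w := y)) s))
          (M2_kernel ((xs(w := y)) s) ((xs(w := y)) w)) \<partial>\<mu> \<partial>PiM (I - {u} - {w}) (\<lambda>_. \<mu>))"
    by (rule integral_PiM_remove_coordinate[OF _ _ borel_measurable_frob_inner])
      (use I distinct in \<open>auto intro!: measurable_M2_kernel_PiM measurable_M2_projection_PiM
        abs_frob_inner_le abs_M2_kernel_le abs_M2_projection_le\<close>)
  also have "\<dots> = (\<integral>xs. frob_inner p (M2_projection (xs s)) (M2_projection (xs s)) \<partial>PiM (I - {u} - {w}) (\<lambda>_. \<mu>))"
    using distinct by (auto simp: integral_frob_inner_M2_kernel_right)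
  also have "\<dots> \<le> 9 * C * real p"
  proof -
    interpret P: prob_space "PiM (I - {u} - {w}) (\<lambda>_. \<mu>)"
      by (rule prob_space_PiM) (rule prob_space_axioms)
    have bound: "\<bar>frob_inner p (M2_projection x) (M2_projection x)\<bar> \<le> 9 * C * real p" for x
      using frob_inner_self_nonneg frob_inner_self_le[OF sum_M2_projection_column_le[OF C]]
      by (simp add: mult.commute)
    have "\<bar>\<integral>xs. frob_inner p (M2_projection (xs s)) (M2_projection (xs s)) \<partial>PiM (I - {u} - {w}) (\<lambda>_. \<mu>)\<bar>
        \<le> 9 * C * real p"
      by (rule P.abs_integral_le_bound) (rule bound)
    then show ?thesis
      by simp
  qed
  finally show ?thesis .
qed

lemma M2_kernel_doubleton:
  "{a, b} = {c, d} \<Longrightarrow> M2_kernel (xs a) (xs b) = M2_kernel (xs c) (xs d)"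
  by (auto simp: doubleton_eq_iff M2_kernel_commute)

lemma integral_M2_kernel_index_pairs_le:
  assumes C: "0 < C" "spec_norm p (Sigma1 \<mu>) \<le> C"
    and q: "q \<in> index_pairs n" and q': "q' \<in> index_pairs n"
  shows "(\<integral>xs. frob_inner p (M2_kernel (xs (fst q)) (xs (snd q))) (M2_kernel (xs (fst q')) (xs (snd q')))
      \<partial>PiM {..<n} (\<lambda>_. \<mu>))
    \<le> (if q' = q then real p * real p * (6 * 6) else 0) + (if pairs_meet q q' then 9 * C * real p else 0)"
    (is "?E \<le> ?a + ?b")
proof -
  interpret P: prob_space "PiM {..<n} (\<lambda>_. \<mu>)"
    by (rule prob_space_PiM) (rule prob_space_axioms)
  have "0 \<le> ?a" "0 \<le> ?b"
    using C by auto
  have in_range: "fst q < n" "snd q < n" "fst q' < n" "snd q' < n" "fst q < snd q" "fst q' < snd q'"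
    using q q' by (auto simp: index_pairs_def)
  consider (same) "q' = q" | (disjoint) "\<not> pairs_meet q q'" | (shared) "q' \<noteq> q" "pairs_meet q q'"
    by blast
  then show ?thesis
  proof cases
    case same
    have "\<bar>?E\<bar> \<le> real p * real p * (6 * 6)"
      by (intro P.abs_integral_le_bound abs_frob_inner_le abs_M2_kernel_le)
    then show ?thesis
      using same \<open>0 \<le> ?b\<close> by simp
  next
    case disjoint
    then have "?E = 0"
      using in_range by (intro integral_M2_kernel_disjoint) (auto simp: pairs_meet_def)
    then show ?thesis
      using \<open>0 \<le> ?a\<close> \<open>0 \<le> ?b\<close> by simp
  next
    case shared
    obtain s u w where suw: "distinct [s, u, w]" "{s, u} = {fst q, snd q}" "{s, w} = {fst q', snd q'}"
      by (rule meeting_index_pairs_obtain_shared[OF q q' shared])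
    then have "{s, u, w} \<subseteq> {..<n}"
      using in_range by (auto simp: doubleton_eq_iff)
    then have "?E \<le> 9 * C * real p"
      using suw integral_M2_kernel_shared_le[OF C, of "{..<n}" s u w]
      by (simp add: M2_kernel_doubleton[of "fst q" "snd q" s u] M2_kernel_doubleton[of "fst q'" "snd q'" s w])
    then show ?thesis
      using shared by simp
  qed
qed

lemma M2_eq_sum_index_pairs:
  "M2 \<mu> n xs = (\<lambda>k l. 2 / (real n * (real n - 1)) *
      (\<Sum>q\<in>index_pairs n. M2_kernel (xs (fst q)) (xs (snd q)) k l))"
  unfolding M2_def M2_kernel_def sum_index_pairs by (simp add: case_prod_beta)

lemma integral_frob_norm_M2_le:
  assumes C: "0 < C" "spec_norm p (Sigma1 \<mu>) \<le> C" and n: "2 \<le> n"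
  shows "(\<integral>xs. (frob_norm p (M2 \<mu> n xs))\<^sup>2 \<partial>PiM {..<n} (\<lambda>_. \<mu>))
    \<le> real p * (144 * (real p + C * real n) / (real n - 1)\<^sup>2)"
proof -
  interpret P: prob_space "PiM {..<n} (\<lambda>_. \<mu>)"
    by (rule prob_space_PiM) (rule prob_space_axioms)
  let ?c = "2 / (real n * (real n - 1))"
  let ?T = "\<lambda>q q' xs. frob_inner p (M2_kernel (xs (fst q)) (xs (snd q))) (M2_kernel (xs (fst q')) (xs (snd q')))"
  have "integrable (PiM {..<n} (\<lambda>_. \<mu>)) (?T q q')"
    if "q \<in> index_pairs n" "q' \<in> index_pairs n" for q q'
    by (rule P.integrable_bounded[OF borel_measurable_frob_inner])
      (use that in \<open>auto simp: index_pairs_def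
        intro!: measurable_M2_kernel_PiM abs_frob_inner_le abs_M2_kernel_le\<close>)
  moreover have "(frob_norm p (M2 \<mu> n xs))\<^sup>2 = ?c\<^sup>2 * (\<Sum>q\<in>index_pairs n. \<Sum>q'\<in>index_pairs n. ?T q q' xs)" for xs
    unfolding frob_norm_square M2_eq_sum_index_pairs frob_inner_mult_mult frob_inner_sum_sum ..
  ultimately have "(\<integral>xs. (frob_norm p (M2 \<mu> n xs))\<^sup>2 \<partial>PiM {..<n} (\<lambda>_. \<mu>))
      = ?c\<^sup>2 * (\<Sum>q\<in>index_pairs n. \<Sum>q'\<in>index_pairs n. \<integral>xs. ?T q q' xs \<partial>PiM {..<n} (\<lambda>_. \<mu>))"
    by (simp add: Bochner_Integration.integral_sum Bochner_Integration.integrable_sum)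
  also have "\<dots> \<le> ?c\<^sup>2 * (real n * real n * (real p * real p * (6 * 6) + 4 * real n * (9 * C * real p)))"
    using C by (intro mult_left_mono sum_index_pairs_le integral_M2_kernel_index_pairs_le) auto
  also have "\<dots> = real p * (144 * (real p + C * real n) / (real n - 1)\<^sup>2)"
  proof -
    have "(2 / (a * b))\<^sup>2 * (a * a * (P * P * (6 * 6) + 4 * a * (9 * C * P)))
        = P * (144 * (P + C * a) / b\<^sup>2)" if "a \<noteq> 0" "b \<noteq> 0" for a b P :: real
      using that by (simp add: field_simps power2_eq_square)
    then show ?thesis
      using n by simp
  qed
  finally show ?thesis .
qed

lemma normalized_integral_frob_norm_M2_le:
  assumes C: "0 < C" "spec_norm p (Sigma1 \<mu>) \<le> C" and n: "2 \<le> n"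
  shows "1 / real p * (\<integral>xs. (frob_norm p (M2 \<mu> n xs))\<^sup>2 \<partial>PiM {..<n} (\<lambda>_. \<mu>))
    \<le> 144 * (real p / real n * (real n / (real n - 1)\<^sup>2) + C * (real n / (real n - 1)\<^sup>2))"
proof -
  have "1 / real p * (\<integral>xs. (frob_norm p (M2 \<mu> n xs))\<^sup>2 \<partial>PiM {..<n} (\<lambda>_. \<mu>))
      \<le> 1 / real p * (real p * (144 * (real p + C * real n) / (real n - 1)\<^sup>2))"
    by (intro mult_left_mono integral_frob_norm_M2_le[OF C n]) simp
  also have "\<dots> \<le> 144 * (real p + C * real n) / (real n - 1)\<^sup>2"
    using C by (cases "p = 0") simp_all
  also have "\<dots> = 144 * (real p / real n * (real n / (real n - 1)\<^sup>2) + C * (real n / (real n - 1)\<^sup>2))"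
  proof -
    have "144 * (P + C * a) / b = 144 * (P / a * (a / b) + C * (a / b))" if "a \<noteq> 0" for P a b :: real
      using that by (simp add: field_simps add_divide_distrib)
    then show ?thesis
      using n by simp
  qed
  finally show ?thesis .
qed

end

theorem lemma2:
  fixes p :: "nat \<Rightarrow> nat" and \<mu> :: "nat \<Rightarrow> (nat \<Rightarrow> real) measure"
    and C c :: real
  assumes prob: "\<And>n. prob_space (\<mu> n)"
    and sets: "\<And>n. sets (\<mu> n) = sets (PiM {..<p n} (\<lambda>_. borel))"
    and abs_cont: "\<And>n. absolutely_continuous (PiM {..<p n} (\<lambda>_. lborel)) (\<mu> n)"
    and bound: "\<And>n. spec_norm (p n) (Sigma1 (\<mu> n)) \<le> C"
    and p_inf: "filterlim p at_top sequentially"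
    and ratio: "(\<lambda>n. real (p n) / real n) \<longlonglongrightarrow> c"
    and c_pos: "c > 0"
  shows "(\<lambda>n. (1 / real (p n)) *
            (\<integral>xs. (frob_norm (p n) (M2 (\<mu> n) n xs))\<^sup>2 \<partial>(PiM {..<n} (\<lambda>_. \<mu> n))))
           \<longlonglongrightarrow> 0"
proof -
  define D where "D = max C 0 + 1"
  have D: "0 < D" "spec_norm (p n) (Sigma1 (\<mu> n)) \<le> D" for n
    using bound[of n] by (auto simp: D_def)
  have sample: "sign_sample (\<mu> n) (p n)" for n
    by (simp add: sign_sample_def sign_sample_axioms_def prob sets)
  let ?U = "\<lambda>n. 144 * (real (p n) / real n * (real n / (real n - 1)\<^sup>2) + D * (real n / (real n - 1)\<^sup>2))"
  show ?thesis
  proof (rule tendsto_sandwich[where f = "\<lambda>_. 0" and h = ?U])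
    show "\<forall>\<^sub>F n in sequentially. 0 \<le> 1 / real (p n) *
        (\<integral>xs. (frob_norm (p n) (M2 (\<mu> n) n xs))\<^sup>2 \<partial>(PiM {..<n} (\<lambda>_. \<mu> n)))"
      by (intro always_eventually allI mult_nonneg_nonneg integral_nonneg_AE) simp_all
    show "\<forall>\<^sub>F n in sequentially. 1 / real (p n) *
        (\<integral>xs. (frob_norm (p n) (M2 (\<mu> n) n xs))\<^sup>2 \<partial>(PiM {..<n} (\<lambda>_. \<mu> n))) \<le> ?U n"
      by (intro eventually_sequentiallyI[of 2] sign_sample.normalized_integral_frob_norm_M2_le[OF sample D])
    have "?U \<longlonglongrightarrow> 144 * (c * 0 + D * 0)"
      by (intro tendsto_intros ratio) real_asymp+
    then show "?U \<longlonglongrightarrow> 0"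
      by simp
  qed simp
qed

end
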